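(* Let $G$ be a compact Hausdorff topological group. If $X$ is a completely normal Hausdorff $G$-space, then $X$ is $G$-completely normal.
   Context: A space is completely normal if any two subsets $A,B$ with $\overline A\cap B=\emptyset=A\cap\overline B$ have disjoint open neighbourhoods. A $G$-space $X$ is $G$-completely normal if any two $G$-invariant subsets $A,B\subseteq X$ with $\overline A\cap B=\emptyset=A\cap\overline B$ have disjoint $G$-invariant open neighbourhoods. *)

theory Defs
  imports "HOL-Analysis.Analysis" "HOL-Algebra.Group_Action"
begin

definition topological_group :: "('g, 'm) monoid_scheme \<Rightarrow> 'g topology \<Rightarrow> bool" where
  "topological_group G T \<longleftrightarrow>
     group G \<and> topspace T = carrier G \<and>
     continuous_map (prod_topology T T) T (\<lambda>(g, h). g \<otimes>\<^bsub>G\<^esub> h) \<and>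
     continuous_map T T (\<lambda>g. inv\<^bsub>G\<^esub> g)"

definition G_space :: "('g, 'm) monoid_scheme \<Rightarrow> 'g topology \<Rightarrow> 'a topology \<Rightarrow> ('g \<Rightarrow> 'a \<Rightarrow> 'a) \<Rightarrow> bool" where
  "G_space G T X \<phi> \<longleftrightarrow>
     topological_group G T \<and> group_action G (topspace X) \<phi> \<and>
     continuous_map (prod_topology T X) X (\<lambda>(g, x). \<phi> g x)"

definition G_invariant :: "('g, 'm) monoid_scheme \<Rightarrow> ('g \<Rightarrow> 'a \<Rightarrow> 'a) \<Rightarrow> 'a set \<Rightarrow> bool" where
  "G_invariant G \<phi> S \<longleftrightarrow> (\<forall>g \<in> carrier G. \<phi> g ` S = S)"

definition completely_normal_space :: "'a topology \<Rightarrow> bool" where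
  "completely_normal_space X \<longleftrightarrow>
     (\<forall>A B. A \<subseteq> topspace X \<and> B \<subseteq> topspace X \<and>
        X closure_of A \<inter> B = {} \<and> A \<inter> X closure_of B = {} \<longrightarrow>
        (\<exists>U V. openin X U \<and> openin X V \<and> A \<subseteq> U \<and> B \<subseteq> V \<and> U \<inter> V = {}))"

definition G_completely_normal :: "('g, 'm) monoid_scheme \<Rightarrow> 'a topology \<Rightarrow> ('g \<Rightarrow> 'a \<Rightarrow> 'a) \<Rightarrow> bool" where
  "G_completely_normal G X \<phi> \<longleftrightarrow>
     (\<forall>A B. A \<subseteq> topspace X \<and> B \<subseteq> topspace X \<and>
        G_invariant G \<phi> A \<and> G_invariant G \<phi> B \<and>
        X closure_of A \<inter> B = {} \<and> A \<inter> X closure_of B = {} \<longrightarrow>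
        (\<exists>U V. openin X U \<and> openin X V \<and> G_invariant G \<phi> U \<and> G_invariant G \<phi> V \<and>
               A \<subseteq> U \<and> B \<subseteq> V \<and> U \<inter> V = {}))"

end

theory Submission
  imports Defs
begin

text \<open>Separate A and B by disjoint open sets U and V using complete normality, then shrink
U and V to their G-cores, the sets of points whose whole orbit stays inside. Invariant sets
contained in U lie in its core, cores of disjoint sets are disjoint, and the core of an open
set is open because its complement is the projection to X of the closed set of pairs (g, x)
with g x outside U, and projections along the compact factor G are closed maps.\<close>

definition G_core :: "('g, 'm) monoid_scheme \<Rightarrow> ('g \<Rightarrow> 'a \<Rightarrow> 'a) \<Rightarrow> 'a set \<Rightarrow> 'a set \<Rightarrow> 'a set" where
  "G_core G \<phi> E U = {x \<in> E. \<forall>g \<in> carrier G. \<phi> g x \<in> U}"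

context group_action
begin

lemma group_of_action: "group G"
  using group_hom group_hom.axioms(1) by blast

lemma G_invariantI:
  assumes "S \<subseteq> E" and "\<And>g x. g \<in> carrier G \<Longrightarrow> x \<in> S \<Longrightarrow> \<phi> g x \<in> S"
  shows "G_invariant G \<phi> S"
  unfolding G_invariant_def
proof (intro ballI equalityI subsetI)
  fix g y assume "g \<in> carrier G" and "y \<in> \<phi> g ` S"
  then show "y \<in> S" using assms(2) by blast
next
  interpret group G by (rule group_of_action)
  fix g y assume g: "g \<in> carrier G" and y: "y \<in> S"
  have "\<phi> g (\<phi> (inv g) y) = y"
    using orbit_sym_aux[of "inv g" y "\<phi> (inv g) y"] g y assms(1) by auto
  moreover have "\<phi> (inv g) y \<in> S" using assms(2) g y by simp
  ultimately show "y \<in> \<phi> g ` S" by (metis image_eqI)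
qed

lemma G_core_subset: "G_core G \<phi> E U \<subseteq> U"
proof
  interpret group G by (rule group_of_action)
  fix x assume x: "x \<in> G_core G \<phi> E U"
  then have "\<phi> \<one> x \<in> U" by (simp add: G_core_def)
  moreover have "\<phi> \<one> x = x"
    using x id_eq_one unfolding G_core_def by (metis (mono_tags) mem_Collect_eq restrict_apply')
  ultimately show "x \<in> U" by simp
qed

lemma G_invariant_G_core: "G_invariant G \<phi> (G_core G \<phi> E U)"
proof (rule G_invariantI)
  interpret group G by (rule group_of_action)
  fix h x assume h: "h \<in> carrier G" and x: "x \<in> G_core G \<phi> E U"
  have "\<phi> g (\<phi> h x) \<in> U" if g: "g \<in> carrier G" for g
  proof -
    have "\<phi> (g \<otimes> h) x \<in> U" using g h x by (simp add: G_core_def)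
    then show ?thesis using composition_rule[of x g h] g h x by (simp add: G_core_def)
  qed
  moreover have "\<phi> h x \<in> E" using element_image[OF h _ refl] x by (simp add: G_core_def)
  ultimately show "\<phi> h x \<in> G_core G \<phi> E U" by (simp add: G_core_def)
qed (auto simp: G_core_def)

end

lemma G_invariant_subset_G_core:
  assumes "G_invariant G \<phi> A" and "A \<subseteq> E" and "A \<subseteq> U"
  shows "A \<subseteq> G_core G \<phi> E U"
  using assms by (fastforce simp: G_invariant_def G_core_def)

lemma openin_G_core:
  assumes "compact_space T" and "topspace T = carrier G"
    and act: "continuous_map (prod_topology T X) X (\<lambda>(g, x). \<phi> g x)"
    and "openin X U"
  shows "openin X (G_core G \<phi> (topspace X) U)"
proof -
  define C where "C = {p \<in> topspace (prod_topology T X). (\<lambda>(g, x). \<phi> g x) p \<in> topspace X - U}"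
  have "closedin (prod_topology T X) C"
    unfolding C_def using assms(4) by (intro closedin_continuous_map_preimage[OF act]) auto
  then have "closedin X (snd ` C)"
    using closed_map_snd[OF assms(1)] by (auto simp: closed_map_def)
  moreover have "G_core G \<phi> (topspace X) U = topspace X - snd ` C"
    using act assms(2)
    by (fastforce simp: G_core_def C_def continuous_map_def Pi_iff image_iff)
  ultimately show ?thesis by auto
qed

theorem lemma3p12:
  fixes G :: "('g, 'm) monoid_scheme" and T :: "'g topology"
    and X :: "'a topology" and \<phi> :: "'g \<Rightarrow> 'a \<Rightarrow> 'a"
  assumes "topological_group G T" and "compact_space T" and "Hausdorff_space T"
    and "G_space G T X \<phi>"
    and "completely_normal_space X" and "Hausdorff_space X"
  shows "G_completely_normal G X \<phi>"
  unfolding G_completely_normal_def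
proof (intro allI impI)
  fix A B assume AB: "A \<subseteq> topspace X \<and> B \<subseteq> topspace X \<and>
        G_invariant G \<phi> A \<and> G_invariant G \<phi> B \<and>
        X closure_of A \<inter> B = {} \<and> A \<inter> X closure_of B = {}"
  then obtain U V where UV: "openin X U" "openin X V" "A \<subseteq> U" "B \<subseteq> V" "U \<inter> V = {}"
    using assms(5) unfolding completely_normal_space_def by meson
  have act: "group_action G (topspace X) \<phi>"
    and cont: "continuous_map (prod_topology T X) X (\<lambda>(g, x). \<phi> g x)"
    and tT: "topspace T = carrier G"
    using assms(1,4) by (auto simp: G_space_def topological_group_def)
  let ?U = "G_core G \<phi> (topspace X) U" and ?V = "G_core G \<phi> (topspace X) V"
  have "openin X ?U" "openin X ?V"
    using openin_G_core[OF assms(2) tT cont] UV(1,2) by blast+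
  moreover have "G_invariant G \<phi> ?U" "G_invariant G \<phi> ?V" "?U \<inter> ?V = {}"
    using group_action.G_invariant_G_core[OF act] group_action.G_core_subset[OF act] UV(5)
    by blast+
  moreover have "A \<subseteq> ?U" "B \<subseteq> ?V"
    using G_invariant_subset_G_core AB UV(3,4) by metis+
  ultimately show "\<exists>U V. openin X U \<and> openin X V \<and> G_invariant G \<phi> U \<and> G_invariant G \<phi> V \<and>
               A \<subseteq> U \<and> B \<subseteq> V \<and> U \<inter> V = {}"
    by blast
qed

end
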